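(* Let $P$ be a poset. (1) If $I$ is a non-empty index set and $\mathcal{U}_i$ is a frame-generating join-specification for $P$ for each $i\in I$, then $\bigcup_{i\in I}\mathcal{U}_i$ is frame-generating. (2) Even finite unions of maximal frame-generating join-specifications need not be maximal: there exist a poset $Q$ and maximal frame-generating join-specifications $\mathcal{U}_1,\mathcal{U}_2$ for $Q$ such that $\mathcal{U}_1\cup\mathcal{U}_2$ is not maximal. (3) If $I$ is a non-empty index set and $\mathcal{U}_i$ is a maximal frame-generating join-specification for $P$ for each $i\in I$, then $\bigcap_{i\in I}\mathcal{U}_i$ is a maximal frame-generating join-specification. (4) Even finite intersections of frame-generating join-specifications need not be frame-generating: there exist a poset $Q$ and frame-generating join-specifications $\mathcal{U}_1,\mathcal{U}_2$ for $Q$ such that $\mathcal{U}_1\cap\mathcal{U}_2$ is not frame-generating.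
   Context: A join-specification for a poset $P$ is a set $\mathcal{U}\subseteq\wp(P)$ such that $\bigvee S$ exists in $P$ for every $S\in\mathcal{U}$, and $\{p\}\in\mathcal{U}$ for every $p\in P$. A $\mathcal{U}$-ideal is a down-closed $C\subseteq P$ such that $\bigvee S\in C$ whenever $S\in\mathcal{U}$ and $S\subseteq C$. $\mathcal{I}_{\mathcal{U}}$ is the complete lattice of $\mathcal{U}$-ideals ordered by inclusion; $\Gamma_{\mathcal{U}}(S)$ is the smallest $\mathcal{U}$-ideal containing $S$. $\mathcal{U}^+=\{S\subseteq P:\bigvee S\text{ exists and }\bigvee S\in\Gamma_{\mathcal{U}}(S)\}$, and $\mathcal{U}$ is maximal if $\mathcal{U}=\mathcal{U}^+$. $\mathcal{U}$ is frame-generating if $\mathcal{I}_{\mathcal{U}}$ is a frame (a complete lattice satisfying $x\wedge\bigvee Y=\bigvee_{y\in Y}(x\wedge y)$). *)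

theory Defs
  imports Main
begin

text \<open>A poset is a carrier P with a relation r satisfying the library predicate
  partial_order_on P r; (x,y) \<in> r means x \<le> y.\<close>

definition is_lub :: "'a set \<Rightarrow> 'a rel \<Rightarrow> 'a set \<Rightarrow> 'a \<Rightarrow> bool" where
  "is_lub P r S x \<longleftrightarrow> x \<in> P \<and> (\<forall>s\<in>S. (s, x) \<in> r)
     \<and> (\<forall>y\<in>P. (\<forall>s\<in>S. (s, y) \<in> r) \<longrightarrow> (x, y) \<in> r)"

definition is_glb :: "'a set \<Rightarrow> 'a rel \<Rightarrow> 'a set \<Rightarrow> 'a \<Rightarrow> bool" where
  "is_glb P r S x \<longleftrightarrow> x \<in> P \<and> (\<forall>s\<in>S. (x, s) \<in> r)
     \<and> (\<forall>y\<in>P. (\<forall>s\<in>S. (y, s) \<in> r) \<longrightarrow> (y, x) \<in> r)"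

definition join_exists :: "'a set \<Rightarrow> 'a rel \<Rightarrow> 'a set \<Rightarrow> bool" where
  "join_exists P r S \<longleftrightarrow> (\<exists>x. is_lub P r S x)"

definition join :: "'a set \<Rightarrow> 'a rel \<Rightarrow> 'a set \<Rightarrow> 'a" where
  "join P r S = (THE x. is_lub P r S x)"

definition meet :: "'a set \<Rightarrow> 'a rel \<Rightarrow> 'a set \<Rightarrow> 'a" where
  "meet P r S = (THE x. is_glb P r S x)"

definition complete_lattice_on :: "'a set \<Rightarrow> 'a rel \<Rightarrow> bool" where
  "complete_lattice_on L r \<longleftrightarrow> partial_order_on L r \<and>
     (\<forall>Y\<subseteq>L. join_exists L r Y) \<and> (\<forall>Y\<subseteq>L. \<exists>x. is_glb L r Y x)"

definition frame_on :: "'a set \<Rightarrow> 'a rel \<Rightarrow> bool" where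
  "frame_on L r \<longleftrightarrow> complete_lattice_on L r \<and>
     (\<forall>x\<in>L. \<forall>Y\<subseteq>L. meet L r {x, join L r Y} = join L r ((\<lambda>y. meet L r {x, y}) ` Y))"

definition join_spec :: "'a set \<Rightarrow> 'a rel \<Rightarrow> 'a set set \<Rightarrow> bool" where
  "join_spec P r U \<longleftrightarrow> U \<subseteq> Pow P \<and> (\<forall>S\<in>U. join_exists P r S) \<and> (\<forall>p\<in>P. {p} \<in> U)"

definition U_ideal :: "'a set \<Rightarrow> 'a rel \<Rightarrow> 'a set set \<Rightarrow> 'a set \<Rightarrow> bool" where
  "U_ideal P r U C \<longleftrightarrow> C \<subseteq> P \<and> (\<forall>x\<in>C. \<forall>y\<in>P. (y, x) \<in> r \<longrightarrow> y \<in> C)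
     \<and> (\<forall>S\<in>U. S \<subseteq> C \<longrightarrow> join P r S \<in> C)"

definition U_ideals :: "'a set \<Rightarrow> 'a rel \<Rightarrow> 'a set set \<Rightarrow> 'a set set" where
  "U_ideals P r U = {C. U_ideal P r U C}"

definition inclusion :: "'b set set \<Rightarrow> 'b set rel" where
  "inclusion L = {(A, B). A \<in> L \<and> B \<in> L \<and> A \<subseteq> B}"

definition Gamma :: "'a set \<Rightarrow> 'a rel \<Rightarrow> 'a set set \<Rightarrow> 'a set \<Rightarrow> 'a set" where
  "Gamma P r U S = \<Inter>{C. U_ideal P r U C \<and> S \<subseteq> C}"

definition U_plus :: "'a set \<Rightarrow> 'a rel \<Rightarrow> 'a set set \<Rightarrow> 'a set set" where
  "U_plus P r U = {S. S \<subseteq> P \<and> join_exists P r S \<and> join P r S \<in> Gamma P r U S}"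

definition maximal_js :: "'a set \<Rightarrow> 'a rel \<Rightarrow> 'a set set \<Rightarrow> bool" where
  "maximal_js P r U \<longleftrightarrow> U = U_plus P r U"

definition frame_generating :: "'a set \<Rightarrow> 'a rel \<Rightarrow> 'a set set \<Rightarrow> bool" where
  "frame_generating P r U \<longleftrightarrow> frame_on (U_ideals P r U) (inclusion (U_ideals P r U))"

end

(*
  Everything rests on a local description of frame generation: a join-specification U
  is frame-generating iff it is meet-distributive, i.e. z is in Gamma_U(down z Int down S)
  whenever S is in U and z <= join S. One direction is the frame law for the ideal
  down z against the join of the principal ideals down s, s in S. Conversely, for a
  down-set A the U-ideal {x. down x Int A <= Gamma_U(A Int D)} contains D, hence
  Gamma_U(D), which gives A Int Gamma_U(D) <= Gamma_U(A Int D).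

  Meet-distributivity passes to unions because Gamma_U grows with U. For an intersection W
  of maximal U_i, put T = down z Int down S: since z is an upper bound of T lying in
  Gamma_{U_i}(T), it is the join of T, so T is in U_i+ = U_i for every i; thus T is in W
  and z = join T is in Gamma_W(T). W is maximal because Gamma_W <= Gamma_{U_i}.

  For (2), on 0, 1 < 3 < 4 > 2 the maximal extensions of {0,1} and of {2,3} each fail
  to reach 4 from {0,1,2}, while their union does so in two steps. For (4), adding
  either {1,2} or {0,1,2} to {3,4} witnesses 5 <= 3 v 4, and the intersection keeps
  neither witness.
*)

theory Submission
  imports Defs
begin

lemma join_eqI: "partial_order_on P r \<Longrightarrow> is_lub P r S x \<Longrightarrow> join P r S = x"
  unfolding join_def partial_order_on_def
  by (rule the_equality) (auto simp: is_lub_def antisym_def)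

lemma meet_eqI: "partial_order_on P r \<Longrightarrow> is_glb P r S x \<Longrightarrow> meet P r S = x"
  unfolding meet_def partial_order_on_def
  by (rule the_equality) (auto simp: is_glb_def antisym_def)

lemma is_lub_join: "partial_order_on P r \<Longrightarrow> join_exists P r S \<Longrightarrow> is_lub P r S (join P r S)"
  unfolding join_exists_def by (metis join_eqI)

lemma join_in_carrier: "partial_order_on P r \<Longrightarrow> join_exists P r S \<Longrightarrow> join P r S \<in> P"
  using is_lub_join unfolding is_lub_def by blast

lemma is_lub_singleton: "partial_order_on P r \<Longrightarrow> p \<in> P \<Longrightarrow> is_lub P r {p} p"
  by (simp add: is_lub_def partial_order_on_def preorder_on_def refl_on_def)

lemma join_singleton: "partial_order_on P r \<Longrightarrow> p \<in> P \<Longrightarrow> join P r {p} = p"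
  by (rule join_eqI[OF _ is_lub_singleton])

lemma join_spec_singletons_Un:
  assumes "partial_order_on P r" and "E \<subseteq> Pow P" and "\<forall>S\<in>E. join_exists P r S"
  shows "join_spec P r ((\<lambda>p. {p}) ` P \<union> E)"
  using assms(2,3) is_lub_singleton[OF assms(1)] unfolding join_spec_def join_exists_def by blast

definition down :: "'a set \<Rightarrow> 'a rel \<Rightarrow> 'a set \<Rightarrow> 'a set" where
  "down P r S = {t \<in> P. \<exists>s\<in>S. (t, s) \<in> r}"

definition down_closed :: "'a set \<Rightarrow> 'a rel \<Rightarrow> 'a set \<Rightarrow> bool" where
  "down_closed P r A \<longleftrightarrow> A \<subseteq> P \<and> (\<forall>x\<in>A. \<forall>y\<in>P. (y, x) \<in> r \<longrightarrow> y \<in> A)"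

lemma down_closed_down: "trans r \<Longrightarrow> down_closed P r (down P r S)"
  unfolding down_closed_def down_def by (auto dest: transD)

lemma U_ideal_iff:
  "U_ideal P r U C \<longleftrightarrow> down_closed P r C \<and> (\<forall>S\<in>U. S \<subseteq> C \<longrightarrow> join P r S \<in> C)"
  unfolding U_ideal_def down_closed_def by blast

lemma U_ideal_antimono: "U \<subseteq> V \<Longrightarrow> U_ideal P r V C \<Longrightarrow> U_ideal P r U C"
  unfolding U_ideal_def by blast

lemma U_ideal_carrier: "partial_order_on P r \<Longrightarrow> join_spec P r U \<Longrightarrow> U_ideal P r U P"
  unfolding U_ideal_def join_spec_def by (simp add: join_in_carrier)

lemma U_ideal_down:
  assumes "partial_order_on P r" and "join_spec P r U" and "p \<in> P"
  shows "U_ideal P r U (down P r {p})"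
proof -
  have "join P r S \<in> down P r {p}" if "S \<in> U" "S \<subseteq> down P r {p}" for S
  proof -
    have "is_lub P r S (join P r S)"
      using is_lub_join[OF assms(1)] assms(2) that(1) unfolding join_spec_def by blast
    with assms(3) that(2) show ?thesis unfolding down_def is_lub_def by blast
  qed
  moreover have "down_closed P r (down P r {p})"
    using assms(1) down_closed_down unfolding partial_order_on_def preorder_on_def by blast
  ultimately show ?thesis
    unfolding U_ideal_iff by blast
qed

lemma U_ideal_Inter:
  assumes "Y \<noteq> {}" and ideals: "\<And>C. C \<in> Y \<Longrightarrow> U_ideal P r U C"
  shows "U_ideal P r U (\<Inter>Y)"
  unfolding U_ideal_def
proof (intro conjI ballI impI)
  from assms obtain C where "C \<in> Y" "C \<subseteq> P" unfolding U_ideal_def by blast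
  then show "\<Inter>Y \<subseteq> P" by blast
next
  fix x y assume "x \<in> \<Inter>Y" "y \<in> P" "(y, x) \<in> r"
  then show "y \<in> \<Inter>Y" using ideals unfolding U_ideal_def by blast
next
  fix S assume "S \<in> U" "S \<subseteq> \<Inter>Y"
  then show "join P r S \<in> \<Inter>Y" using ideals unfolding U_ideal_def by (simp add: le_Inf_iff)
qed

lemma U_ideal_Int: "U_ideal P r U A \<Longrightarrow> U_ideal P r U B \<Longrightarrow> U_ideal P r U (A \<inter> B)"
  using U_ideal_Inter[of "{A, B}" P r U] by auto

lemma Gamma_subset: "X \<subseteq> Gamma P r U X"
  unfolding Gamma_def by blast

lemma Gamma_least: "U_ideal P r U C \<Longrightarrow> X \<subseteq> C \<Longrightarrow> Gamma P r U X \<subseteq> C"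
  unfolding Gamma_def by (rule Inter_lower) simp

lemma Gamma_mono: "X \<subseteq> Y \<Longrightarrow> Gamma P r U X \<subseteq> Gamma P r U Y"
  unfolding Gamma_def by (rule Inter_anti_mono) auto

lemma Gamma_mono_spec: "U \<subseteq> V \<Longrightarrow> Gamma P r U X \<subseteq> Gamma P r V X"
  unfolding Gamma_def by (rule Inter_anti_mono) (auto intro: U_ideal_antimono)

lemma Gamma_join_closed:
  assumes "S \<in> U" and "S \<subseteq> Gamma P r U X"
  shows "join P r S \<in> Gamma P r U X"
  unfolding Gamma_def
proof
  fix C assume "C \<in> {C. U_ideal P r U C \<and> X \<subseteq> C}"
  moreover from this have "S \<subseteq> C" using assms(2) unfolding Gamma_def by blast
  ultimately show "join P r S \<in> C" using assms(1) unfolding U_ideal_def by blast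
qed

lemma Gamma_U_ideal:
  assumes "partial_order_on P r" and "join_spec P r U" and "X \<subseteq> P"
  shows "U_ideal P r U (Gamma P r U X)"
  unfolding Gamma_def
  using U_ideal_carrier[OF assms(1,2)] assms(3) by (intro U_ideal_Inter) auto

lemma partial_order_on_inclusion: "partial_order_on L (inclusion L)"
  unfolding partial_order_on_def preorder_on_def refl_on_def trans_def antisym_def inclusion_def
  by auto

lemma U_ideals_carrier_subset: "C \<in> U_ideals P r U \<Longrightarrow> C \<subseteq> P"
  unfolding U_ideals_def U_ideal_def by blast

lemma is_lub_U_ideals:
  assumes "partial_order_on P r" and "join_spec P r U" and Y: "Y \<subseteq> U_ideals P r U"
  shows "is_lub (U_ideals P r U) (inclusion (U_ideals P r U)) Y (Gamma P r U (\<Union>Y))"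
proof -
  have "\<Union>Y \<subseteq> P" using Y U_ideals_carrier_subset by blast
  then have "Gamma P r U (\<Union>Y) \<in> U_ideals P r U"
    using Gamma_U_ideal[OF assms(1,2)] unfolding U_ideals_def by blast
  moreover have "Gamma P r U (\<Union>Y) \<subseteq> C" if "C \<in> U_ideals P r U" "\<forall>B\<in>Y. B \<subseteq> C" for C
    using that Gamma_least[of P r U C "\<Union>Y"] unfolding U_ideals_def by blast
  ultimately show ?thesis
    using Y Gamma_subset[of "\<Union>Y" P r U] unfolding is_lub_def inclusion_def by auto
qed

lemma is_glb_U_ideals:
  assumes "partial_order_on P r" and "join_spec P r U" and Y: "Y \<subseteq> U_ideals P r U"
  shows "is_glb (U_ideals P r U) (inclusion (U_ideals P r U)) Y (P \<inter> \<Inter>Y)"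
proof -
  have "U_ideal P r U (\<Inter>(insert P Y))"
    using U_ideal_carrier[OF assms(1,2)] Y unfolding U_ideals_def by (intro U_ideal_Inter) auto
  then have "P \<inter> \<Inter>Y \<in> U_ideals P r U" unfolding U_ideals_def by simp
  then show ?thesis
    using Y U_ideals_carrier_subset[of _ P r U] unfolding is_glb_def inclusion_def by auto
qed

lemma join_U_ideals:
  assumes "partial_order_on P r" and "join_spec P r U" and "Y \<subseteq> U_ideals P r U"
  shows "join (U_ideals P r U) (inclusion (U_ideals P r U)) Y = Gamma P r U (\<Union>Y)"
  by (rule join_eqI[OF partial_order_on_inclusion is_lub_U_ideals[OF assms]])

lemma meet_U_ideals_pair:
  assumes "partial_order_on P r" and "join_spec P r U"
    and "A \<in> U_ideals P r U" and "B \<in> U_ideals P r U"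
  shows "meet (U_ideals P r U) (inclusion (U_ideals P r U)) {A, B} = A \<inter> B"
proof -
  have "{A, B} \<subseteq> U_ideals P r U" using assms(3,4) by auto
  then have "meet (U_ideals P r U) (inclusion (U_ideals P r U)) {A, B} = P \<inter> \<Inter>{A, B}"
    by (rule meet_eqI[OF partial_order_on_inclusion is_glb_U_ideals[OF assms(1,2)]])
  also have "\<dots> = A \<inter> B" using U_ideals_carrier_subset[OF assms(3)] by blast
  finally show ?thesis .
qed

lemma complete_lattice_on_U_ideals:
  assumes "partial_order_on P r" and "join_spec P r U"
  shows "complete_lattice_on (U_ideals P r U) (inclusion (U_ideals P r U))"
  unfolding complete_lattice_on_def join_exists_def
  using partial_order_on_inclusion is_lub_U_ideals[OF assms] is_glb_U_ideals[OF assms] by blast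

lemma Gamma_Int_subset: "U_ideal P r U A \<Longrightarrow> Gamma P r U (A \<inter> X) \<subseteq> A \<inter> Gamma P r U X"
  using Gamma_least[of P r U A "A \<inter> X"] Gamma_mono[of "A \<inter> X" X P r U] by blast

lemma meet_join_U_ideals:
  assumes po: "partial_order_on P r" and js: "join_spec P r U"
    and A: "A \<in> U_ideals P r U" and Y: "Y \<subseteq> U_ideals P r U"
  shows "meet (U_ideals P r U) (inclusion (U_ideals P r U)) {A, join (U_ideals P r U) (inclusion (U_ideals P r U)) Y}
    = A \<inter> Gamma P r U (\<Union>Y)"
proof -
  have "\<Union>Y \<subseteq> P" using Y U_ideals_carrier_subset by blast
  then have "Gamma P r U (\<Union>Y) \<in> U_ideals P r U"
    using Gamma_U_ideal[OF po js] unfolding U_ideals_def by blast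
  then show ?thesis using join_U_ideals[OF po js Y] meet_U_ideals_pair[OF po js A] by simp
qed

lemma join_meet_U_ideals:
  assumes po: "partial_order_on P r" and js: "join_spec P r U"
    and A: "A \<in> U_ideals P r U" and Y: "Y \<subseteq> U_ideals P r U"
  shows "join (U_ideals P r U) (inclusion (U_ideals P r U))
      ((\<lambda>B. meet (U_ideals P r U) (inclusion (U_ideals P r U)) {A, B}) ` Y)
    = Gamma P r U (A \<inter> \<Union>Y)"
proof -
  have "(\<lambda>B. meet (U_ideals P r U) (inclusion (U_ideals P r U)) {A, B}) ` Y = (\<inter>) A ` Y"
    using meet_U_ideals_pair[OF po js A] Y by auto
  moreover have "(\<inter>) A ` Y \<subseteq> U_ideals P r U"
    using A Y U_ideal_Int unfolding U_ideals_def by blast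
  moreover have "\<Union>((\<inter>) A ` Y) = A \<inter> \<Union>Y" by blast
  ultimately show ?thesis using join_U_ideals[OF po js] by metis
qed

lemma frame_generating_iff_Int_Gamma_subset:
  assumes po: "partial_order_on P r" and js: "join_spec P r U"
  shows "frame_generating P r U \<longleftrightarrow>
    (\<forall>A\<in>U_ideals P r U. \<forall>Y\<subseteq>U_ideals P r U. A \<inter> Gamma P r U (\<Union>Y) \<subseteq> Gamma P r U (A \<inter> \<Union>Y))"
proof -
  have "Gamma P r U (A \<inter> \<Union>Y) \<subseteq> A \<inter> Gamma P r U (\<Union>Y)" if "A \<in> U_ideals P r U" for A Y
    using that Gamma_Int_subset unfolding U_ideals_def by blast
  then show ?thesis
    using complete_lattice_on_U_ideals[OF po js] meet_join_U_ideals[OF po js] join_meet_U_ideals[OF po js]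
    unfolding frame_generating_def frame_on_def by (metis subset_antisym)
qed

section \<open>A local criterion for frame generation\<close>

definition meet_distributive :: "'a set \<Rightarrow> 'a rel \<Rightarrow> 'a set set \<Rightarrow> bool" where
  "meet_distributive P r U \<longleftrightarrow> (\<forall>S\<in>U. \<forall>z\<in>P. (z, join P r S) \<in> r \<longrightarrow>
     z \<in> Gamma P r U (down P r {z} \<inter> down P r S))"

text \<open>The set below is the Heyting implication from A to G in the lattice of
  down-closed sets; meet-distributivity is exactly what makes it closed under U-joins.\<close>

lemma U_ideal_implication:
  assumes po: "partial_order_on P r" and js: "join_spec P r U" and md: "meet_distributive P r U"
    and A: "down_closed P r A" and G: "U_ideal P r U G"
  shows "U_ideal P r U {x \<in> P. down P r {x} \<inter> A \<subseteq> G}" (is "U_ideal P r U ?E")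
  unfolding U_ideal_iff
proof
  have "trans r" using po unfolding partial_order_on_def preorder_on_def by blast
  then show "down_closed P r ?E" unfolding down_closed_def down_def by (auto dest: transD)
  show "\<forall>S\<in>U. S \<subseteq> ?E \<longrightarrow> join P r S \<in> ?E"
  proof (intro ballI impI)
    fix S assume S: "S \<in> U" "S \<subseteq> ?E"
    have "z \<in> G" if z: "z \<in> down P r {join P r S} \<inter> A" for z
    proof -
      have "down P r {z} \<inter> down P r S \<subseteq> G"
      proof
        fix t assume t: "t \<in> down P r {z} \<inter> down P r S"
        then obtain s where "s \<in> S" "(t, s) \<in> r" unfolding down_def by blast
        moreover have "t \<in> A" using A t z unfolding down_closed_def down_def by blast
        ultimately show "t \<in> G" using S t unfolding down_def by blast
      qed
      moreover have "z \<in> Gamma P r U (down P r {z} \<inter> down P r S)"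
        using md S z unfolding meet_distributive_def down_def by blast
      ultimately show ?thesis using Gamma_least[OF G] by blast
    qed
    moreover have "join P r S \<in> P"
      using js S(1) join_in_carrier[OF po] unfolding join_spec_def by blast
    ultimately show "join P r S \<in> ?E" by blast
  qed
qed

lemma Int_Gamma_subset_Gamma_Int:
  assumes po: "partial_order_on P r" and js: "join_spec P r U" and md: "meet_distributive P r U"
    and A: "down_closed P r A" and D: "down_closed P r D"
  shows "A \<inter> Gamma P r U D \<subseteq> Gamma P r U (A \<inter> D)"
proof -
  let ?G = "Gamma P r U (A \<inter> D)"
  have "A \<inter> D \<subseteq> P" using A unfolding down_closed_def by blast
  then have "U_ideal P r U ?G" by (rule Gamma_U_ideal[OF po js])
  then have E: "U_ideal P r U {x \<in> P. down P r {x} \<inter> A \<subseteq> ?G}"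
    by (rule U_ideal_implication[OF po js md A])
  have "down P r {x} \<inter> A \<subseteq> A \<inter> D" if "x \<in> D" for x
    using D that unfolding down_closed_def down_def by auto
  then have "D \<subseteq> {x \<in> P. down P r {x} \<inter> A \<subseteq> ?G}"
    using D Gamma_subset[of "A \<inter> D" P r U] unfolding down_closed_def by blast
  then have "Gamma P r U D \<subseteq> {x \<in> P. down P r {x} \<inter> A \<subseteq> ?G}" by (rule Gamma_least[OF E])
  moreover have "x \<in> down P r {x}" if "x \<in> P" for x
    using po that unfolding partial_order_on_def preorder_on_def refl_on_def down_def by blast
  ultimately show ?thesis by blast
qed

lemma Union_down_singletons: "(\<Union>s\<in>S. down P r {s}) = down P r S"
  by (auto simp: down_def)

lemma frame_generating_if_meet_distributive:
  assumes po: "partial_order_on P r" and js: "join_spec P r U" and md: "meet_distributive P r U"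
  shows "frame_generating P r U"
  unfolding frame_generating_iff_Int_Gamma_subset[OF po js]
proof (intro ballI allI impI)
  fix A Y assume "A \<in> U_ideals P r U" and "Y \<subseteq> U_ideals P r U"
  then have "down_closed P r A" and "\<forall>B\<in>Y. down_closed P r B"
    by (auto simp: U_ideals_def U_ideal_iff)
  then have "down_closed P r A" and "down_closed P r (\<Union>Y)"
    unfolding down_closed_def by (simp, fast)+
  then show "A \<inter> Gamma P r U (\<Union>Y) \<subseteq> Gamma P r U (A \<inter> \<Union>Y)"
    by (rule Int_Gamma_subset_Gamma_Int[OF po js md])
qed

lemma meet_distributive_if_frame_generating:
  assumes po: "partial_order_on P r" and js: "join_spec P r U" and fg: "frame_generating P r U"
  shows "meet_distributive P r U"
  unfolding meet_distributive_def
proof (intro ballI impI)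
  fix S z assume S: "S \<in> U" and z: "z \<in> P" and z_le: "(z, join P r S) \<in> r"
  define Y where "Y = (\<lambda>s. down P r {s}) ` S"
  have refl: "\<And>x. x \<in> P \<Longrightarrow> (x, x) \<in> r"
    using po unfolding partial_order_on_def preorder_on_def refl_on_def by auto
  have "S \<subseteq> P" using js S unfolding join_spec_def by blast
  then have Y: "Y \<subseteq> U_ideals P r U"
    unfolding Y_def U_ideals_def using U_ideal_down[OF po js] by blast
  have down_z: "down P r {z} \<in> U_ideals P r U"
    unfolding U_ideals_def using U_ideal_down[OF po js z] by simp
  have "S \<subseteq> down P r S" using \<open>S \<subseteq> P\<close> refl unfolding down_def by blast
  then have "S \<subseteq> Gamma P r U (\<Union>Y)"
    using Gamma_subset[of "\<Union>Y" P r U] unfolding Y_def Union_down_singletons by blast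
  then have "join P r S \<in> Gamma P r U (\<Union>Y)" by (rule Gamma_join_closed[OF S])
  moreover have "U_ideal P r U (Gamma P r U (\<Union>Y))"
    by (rule Gamma_U_ideal[OF po js]) (use Y U_ideals_carrier_subset in blast)
  ultimately have "z \<in> down P r {z} \<inter> Gamma P r U (\<Union>Y)"
    using z z_le refl unfolding U_ideal_def down_def by blast
  also have "\<dots> \<subseteq> Gamma P r U (down P r {z} \<inter> \<Union>Y)"
    using fg down_z Y unfolding frame_generating_iff_Int_Gamma_subset[OF po js] by blast
  finally show "z \<in> Gamma P r U (down P r {z} \<inter> down P r S)"
    unfolding Y_def Union_down_singletons .
qed

lemma frame_generating_iff_meet_distributive:
  "partial_order_on P r \<Longrightarrow> join_spec P r U \<Longrightarrow> frame_generating P r U \<longleftrightarrow> meet_distributive P r U"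
  using frame_generating_if_meet_distributive meet_distributive_if_frame_generating by blast

section \<open>The maximal extension U+\<close>

lemma subset_U_plus:
  assumes po: "partial_order_on P r" and js: "join_spec P r U"
  shows "U \<subseteq> U_plus P r U"
proof
  fix S assume S: "S \<in> U"
  then have "S \<subseteq> P" and "join_exists P r S" using js unfolding join_spec_def by blast+
  moreover have "join P r S \<in> Gamma P r U S" by (rule Gamma_join_closed[OF S Gamma_subset])
  ultimately show "S \<in> U_plus P r U" unfolding U_plus_def by blast
qed

lemma U_ideal_U_plus_iff:
  assumes po: "partial_order_on P r" and js: "join_spec P r U"
  shows "U_ideal P r (U_plus P r U) C \<longleftrightarrow> U_ideal P r U C"
proof
  assume "U_ideal P r (U_plus P r U) C"
  then show "U_ideal P r U C" by (rule U_ideal_antimono[OF subset_U_plus[OF po js]])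
next
  assume C: "U_ideal P r U C"
  have "join P r S \<in> C" if "S \<in> U_plus P r U" and "S \<subseteq> C" for S
    using that Gamma_least[OF C] unfolding U_plus_def by blast
  with C show "U_ideal P r (U_plus P r U) C" unfolding U_ideal_def by blast
qed

lemma U_ideals_U_plus:
  assumes "partial_order_on P r" and "join_spec P r U"
  shows "U_ideals P r (U_plus P r U) = U_ideals P r U"
  unfolding U_ideals_def using U_ideal_U_plus_iff[OF assms] by blast

lemma Gamma_U_plus:
  assumes "partial_order_on P r" and "join_spec P r U"
  shows "Gamma P r (U_plus P r U) X = Gamma P r U X"
  unfolding Gamma_def using U_ideal_U_plus_iff[OF assms] by simp

lemma join_spec_U_plus:
  "partial_order_on P r \<Longrightarrow> join_spec P r U \<Longrightarrow> join_spec P r (U_plus P r U)"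
  using subset_U_plus unfolding join_spec_def U_plus_def by blast

lemma maximal_js_U_plus:
  assumes "partial_order_on P r" and "join_spec P r U"
  shows "maximal_js P r (U_plus P r U)"
  unfolding maximal_js_def U_plus_def[of P r "U_plus P r U"] Gamma_U_plus[OF assms]
  by (simp add: U_plus_def)

lemma frame_generating_U_plus_iff:
  "partial_order_on P r \<Longrightarrow> join_spec P r U \<Longrightarrow>
    frame_generating P r (U_plus P r U) \<longleftrightarrow> frame_generating P r U"
  unfolding frame_generating_def by (simp add: U_ideals_U_plus)

lemma is_lub_if_mem_Gamma:
  assumes po: "partial_order_on P r" and js: "join_spec P r U" and T: "T \<subseteq> P"
    and z: "z \<in> Gamma P r U T" and ub: "\<forall>t\<in>T. (t, z) \<in> r"
  shows "is_lub P r T z"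
proof -
  have "z \<in> P" using Gamma_U_ideal[OF po js T] z unfolding U_ideal_def by blast
  moreover have "(z, y) \<in> r" if "y \<in> P" and "\<forall>t\<in>T. (t, y) \<in> r" for y
  proof -
    have "T \<subseteq> down P r {y}" using T that(2) unfolding down_def by blast
    then have "Gamma P r U T \<subseteq> down P r {y}" by (rule Gamma_least[OF U_ideal_down[OF po js that(1)]])
    with z show ?thesis unfolding down_def by blast
  qed
  ultimately show ?thesis using ub unfolding is_lub_def by blast
qed

section \<open>Unions and intersections\<close>

lemma join_spec_UNION:
  "I \<noteq> {} \<Longrightarrow> (\<And>i. i \<in> I \<Longrightarrow> join_spec P r (Us i)) \<Longrightarrow> join_spec P r (\<Union>i\<in>I. Us i)"
  unfolding join_spec_def by blast

lemma join_spec_INTER: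
  assumes "I \<noteq> {}" and js: "\<And>i. i \<in> I \<Longrightarrow> join_spec P r (Us i)"
  shows "join_spec P r (\<Inter>i\<in>I. Us i)"
proof -
  from assms(1) obtain i where i: "i \<in> I" by blast
  then have "(\<Inter>i\<in>I. Us i) \<subseteq> Us i" by (rule INT_lower)
  with js[OF i] have "(\<Inter>i\<in>I. Us i) \<subseteq> Pow P" "\<forall>S\<in>(\<Inter>i\<in>I. Us i). join_exists P r S"
    unfolding join_spec_def by auto
  moreover have "\<forall>p\<in>P. {p} \<in> (\<Inter>i\<in>I. Us i)" using js unfolding join_spec_def by auto
  ultimately show ?thesis unfolding join_spec_def by blast
qed

lemma meet_distributive_UNION:
  assumes "\<And>i. i \<in> I \<Longrightarrow> meet_distributive P r (Us i)"
  shows "meet_distributive P r (\<Union>i\<in>I. Us i)"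
  unfolding meet_distributive_def
proof (intro ballI impI)
  fix S z assume "S \<in> (\<Union>i\<in>I. Us i)" and z: "z \<in> P" "(z, join P r S) \<in> r"
  then obtain i where i: "i \<in> I" "S \<in> Us i" by blast
  with assms z have "z \<in> Gamma P r (Us i) (down P r {z} \<inter> down P r S)"
    unfolding meet_distributive_def by blast
  moreover have "Us i \<subseteq> (\<Union>i\<in>I. Us i)" using i by blast
  ultimately show "z \<in> Gamma P r (\<Union>i\<in>I. Us i) (down P r {z} \<inter> down P r S)"
    using Gamma_mono_spec by blast
qed

lemma frame_generating_UNION:
  assumes po: "partial_order_on P r" and I: "I \<noteq> {}"
    and js: "\<And>i. i \<in> I \<Longrightarrow> join_spec P r (Us i)"
    and fg: "\<And>i. i \<in> I \<Longrightarrow> frame_generating P r (Us i)"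
  shows "frame_generating P r (\<Union>i\<in>I. Us i)"
proof (rule frame_generating_if_meet_distributive[OF po join_spec_UNION[OF I js]])
  have "meet_distributive P r (Us i)" if "i \<in> I" for i
    using frame_generating_iff_meet_distributive[OF po js[OF that]] fg[OF that] by blast
  then show "meet_distributive P r (\<Union>i\<in>I. Us i)" by (rule meet_distributive_UNION)
qed

lemma maximal_js_INTER:
  assumes po: "partial_order_on P r" and I: "I \<noteq> {}"
    and js: "\<And>i. i \<in> I \<Longrightarrow> join_spec P r (Us i)"
    and max: "\<And>i. i \<in> I \<Longrightarrow> maximal_js P r (Us i)"
  shows "maximal_js P r (\<Inter>i\<in>I. Us i)"
proof -
  have "S \<in> Us i" if S: "S \<in> U_plus P r (\<Inter>i\<in>I. Us i)" and i: "i \<in> I" for S i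
  proof -
    have "Gamma P r (\<Inter>i\<in>I. Us i) S \<subseteq> Gamma P r (Us i) S"
      using i by (intro Gamma_mono_spec) blast
    with S have "S \<in> U_plus P r (Us i)" unfolding U_plus_def by blast
    with max[OF i] show ?thesis unfolding maximal_js_def by simp
  qed
  then have "U_plus P r (\<Inter>i\<in>I. Us i) \<subseteq> (\<Inter>i\<in>I. Us i)" by blast
  moreover have "(\<Inter>i\<in>I. Us i) \<subseteq> U_plus P r (\<Inter>i\<in>I. Us i)"
    by (rule subset_U_plus[OF po join_spec_INTER[OF I js]])
  ultimately show ?thesis unfolding maximal_js_def by blast
qed

lemma meet_distributive_INTER:
  assumes po: "partial_order_on P r" and I: "I \<noteq> {}"
    and js: "\<And>i. i \<in> I \<Longrightarrow> join_spec P r (Us i)"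
    and max: "\<And>i. i \<in> I \<Longrightarrow> maximal_js P r (Us i)"
    and md: "\<And>i. i \<in> I \<Longrightarrow> meet_distributive P r (Us i)"
  shows "meet_distributive P r (\<Inter>i\<in>I. Us i)"
  unfolding meet_distributive_def
proof (intro ballI impI)
  fix S z assume S: "S \<in> (\<Inter>i\<in>I. Us i)" and z: "z \<in> P" "(z, join P r S) \<in> r"
  define T where "T = down P r {z} \<inter> down P r S"
  obtain i0 where i0: "i0 \<in> I" using I by blast
  have T_sub: "T \<subseteq> P" and ub: "\<forall>t\<in>T. (t, z) \<in> r" unfolding T_def down_def by auto
  have z_Gamma: "z \<in> Gamma P r (Us i) T" if "i \<in> I" for i
    using md[OF that] S z that unfolding meet_distributive_def T_def by blast
  have lub: "is_lub P r T z" by (rule is_lub_if_mem_Gamma[OF po js[OF i0] T_sub z_Gamma[OF i0] ub])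
  then have join_T: "join P r T = z" by (rule join_eqI[OF po])
  have "T \<in> Us i" if i: "i \<in> I" for i
  proof -
    have "T \<in> U_plus P r (Us i)"
      unfolding U_plus_def join_exists_def using T_sub lub z_Gamma[OF i] join_T by blast
    with max[OF i] show ?thesis unfolding maximal_js_def by simp
  qed
  then have "join P r T \<in> Gamma P r (\<Inter>i\<in>I. Us i) T"
    by (intro Gamma_join_closed Gamma_subset) blast
  then have "z \<in> Gamma P r (\<Inter>i\<in>I. Us i) T" unfolding join_T .
  then show "z \<in> Gamma P r (\<Inter>i\<in>I. Us i) (down P r {z} \<inter> down P r S)"
    unfolding T_def .
qed

lemma frame_generating_INTER:
  assumes po: "partial_order_on P r" and I: "I \<noteq> {}"
    and js: "\<And>i. i \<in> I \<Longrightarrow> join_spec P r (Us i)"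
    and max: "\<And>i. i \<in> I \<Longrightarrow> maximal_js P r (Us i)"
    and fg: "\<And>i. i \<in> I \<Longrightarrow> frame_generating P r (Us i)"
  shows "frame_generating P r (\<Inter>i\<in>I. Us i)"
proof (rule frame_generating_if_meet_distributive[OF po join_spec_INTER[OF I js]])
  have md: "meet_distributive P r (Us i)" if "i \<in> I" for i
    using frame_generating_iff_meet_distributive[OF po js[OF that]] fg[OF that] by blast
  show "meet_distributive P r (\<Inter>i\<in>I. Us i)" by (rule meet_distributive_INTER[OF po I js max md])
qed

lemma meet_distributiveI:
  assumes po: "partial_order_on P r" and js: "join_spec P r U"
    and witness: "\<And>S z. S \<in> U \<Longrightarrow> z \<in> P \<Longrightarrow> (z, join P r S) \<in> r \<Longrightarrow> z \<noteq> join P r S \<Longrightarrow>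
      \<forall>s\<in>S. (z, s) \<notin> r \<Longrightarrow> \<exists>S'\<in>U. S' \<subseteq> down P r {z} \<inter> down P r S \<and> join P r S' = z"
  shows "meet_distributive P r U"
  unfolding meet_distributive_def
proof (intro ballI impI)
  fix S z assume S: "S \<in> U" and z: "z \<in> P" and z_le: "(z, join P r S) \<in> r"
  let ?T = "down P r {z} \<inter> down P r S"
  have refl: "\<And>x. x \<in> P \<Longrightarrow> (x, x) \<in> r"
    using po unfolding partial_order_on_def preorder_on_def refl_on_def by auto
  have S_sub: "S \<subseteq> P" and "join_exists P r S" using js S unfolding join_spec_def by blast+
  from this(2) have lub: "is_lub P r S (join P r S)" by (rule is_lub_join[OF po])
  consider (below) s where "s \<in> S" "(z, s) \<in> r" | (top) "z = join P r S"
    | (other) S' where "S' \<in> U" "S' \<subseteq> ?T" "join P r S' = z"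
    using witness[OF S z z_le] by blast
  then show "z \<in> Gamma P r U ?T"
  proof cases
    case below
    with z refl have "z \<in> ?T" unfolding down_def by blast
    then show ?thesis by (rule subsetD[OF Gamma_subset])
  next
    case top
    have "s \<in> ?T" if "s \<in> S" for s
    proof -
      have "s \<in> P" "(s, z) \<in> r" using that S_sub lub top unfolding is_lub_def by auto
      then show ?thesis using that refl unfolding down_def by blast
    qed
    then have "S \<subseteq> ?T" by blast
    then have "join P r S \<in> Gamma P r U ?T"
      using Gamma_subset[of ?T P r U] by (intro Gamma_join_closed[OF S]) blast
    with top show ?thesis by simp
  next
    case other
    then have "join P r S' \<in> Gamma P r U ?T"
      using Gamma_subset[of ?T P r U] by (intro Gamma_join_closed) blast+
    with other show ?thesis by simp
  qed
qed

lemma meet_distributive_singletons_UnI: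
  assumes po: "partial_order_on P r" and js: "join_spec P r ((\<lambda>p. {p}) ` P \<union> E)"
    and witness: "\<And>S z. S \<in> E \<Longrightarrow> z \<in> P \<Longrightarrow> (z, join P r S) \<in> r \<Longrightarrow> z \<noteq> join P r S \<Longrightarrow>
      \<forall>s\<in>S. (z, s) \<notin> r \<Longrightarrow>
      \<exists>S'\<in>(\<lambda>p. {p}) ` P \<union> E. S' \<subseteq> down P r {z} \<inter> down P r S \<and> join P r S' = z"
  shows "meet_distributive P r ((\<lambda>p. {p}) ` P \<union> E)"
proof (rule meet_distributiveI[OF po js])
  fix S z assume S: "S \<in> (\<lambda>p. {p}) ` P \<union> E" and z: "z \<in> P" "(z, join P r S) \<in> r"
    "z \<noteq> join P r S" and not_below: "\<forall>s\<in>S. (z, s) \<notin> r"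
  have "S \<notin> (\<lambda>p. {p}) ` P"
  proof
    assume "S \<in> (\<lambda>p. {p}) ` P"
    then obtain p where "p \<in> P" "S = {p}" by blast
    with \<open>(z, join P r S) \<in> r\<close> not_below show False by (simp add: join_singleton[OF po])
  qed
  with S have "S \<in> E" by blast
  from this z not_below
  show "\<exists>S'\<in>(\<lambda>p. {p}) ` P \<union> E. S' \<subseteq> down P r {z} \<inter> down P r S \<and> join P r S' = z"
    by (rule witness)
qed

lemma U_ideal_singletons_Un_iff:
  assumes po: "partial_order_on P r"
  shows "U_ideal P r ((\<lambda>p. {p}) ` P \<union> E) C \<longleftrightarrow>
    down_closed P r C \<and> (\<forall>S\<in>E. S \<subseteq> C \<longrightarrow> join P r S \<in> C)"
  unfolding U_ideal_iff by (auto simp: join_singleton[OF po])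

lemma not_mem_U_plus_if_U_ideal:
  "U_ideal P r U C \<Longrightarrow> S \<subseteq> C \<Longrightarrow> join P r S \<notin> C \<Longrightarrow> S \<notin> U_plus P r U"
  unfolding U_plus_def using Gamma_least by blast

lemma not_meet_distributive_if_U_ideal:
  assumes "S \<in> U" and "z \<in> P" and "(z, join P r S) \<in> r"
    and "U_ideal P r U C" and "down P r {z} \<inter> down P r S \<subseteq> C" and "z \<notin> C"
  shows "\<not> meet_distributive P r U"
  using assms Gamma_least[OF assms(4,5)] unfolding meet_distributive_def by blast

section \<open>A union of maximal frame-generating specifications that is not maximal\<close>

definition union_ex_carrier :: "nat set" where
  "union_ex_carrier = {0, 1, 2, 3, 4}"

definition union_ex_order :: "nat rel" where
  "union_ex_order = {(0, 0), (1, 1), (2, 2), (3, 3), (4, 4),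
    (0, 3), (1, 3), (0, 4), (1, 4), (2, 4), (3, 4)}"

definition union_ex_spec_a :: "nat set set" where
  "union_ex_spec_a = (\<lambda>p. {p}) ` union_ex_carrier \<union> {{0, 1}}"

definition union_ex_spec_b :: "nat set set" where
  "union_ex_spec_b = (\<lambda>p. {p}) ` union_ex_carrier \<union> {{2, 3}}"

lemma partial_order_union_ex: "partial_order_on union_ex_carrier union_ex_order"
  unfolding partial_order_on_def preorder_on_def refl_on_def trans_def antisym_def
    union_ex_carrier_def union_ex_order_def
  by auto

lemma union_ex_lubs:
  "is_lub union_ex_carrier union_ex_order {0, 1} 3"
  "is_lub union_ex_carrier union_ex_order {2, 3} 4"
  "is_lub union_ex_carrier union_ex_order {0, 1, 2} 4"
  by (simp_all add: is_lub_def union_ex_carrier_def union_ex_order_def)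

lemmas union_ex_joins = union_ex_lubs[THEN join_eqI[OF partial_order_union_ex]]

lemma join_spec_union_ex:
  "join_spec union_ex_carrier union_ex_order union_ex_spec_a"
  "join_spec union_ex_carrier union_ex_order union_ex_spec_b"
  unfolding union_ex_spec_a_def union_ex_spec_b_def
  by (rule join_spec_singletons_Un[OF partial_order_union_ex],
      simp add: union_ex_carrier_def, use union_ex_lubs in \<open>simp add: join_exists_def, blast\<close>)+

text \<open>The simplifier rewrites the numeral 1 :: nat to Suc 0, hence the
  [simplified] join equations below.\<close>

lemma meet_distributive_union_ex:
  "meet_distributive union_ex_carrier union_ex_order union_ex_spec_a"
  "meet_distributive union_ex_carrier union_ex_order union_ex_spec_b"
  unfolding union_ex_spec_a_def union_ex_spec_b_def
  by (rule meet_distributive_singletons_UnI[OF partial_order_union_ex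
        join_spec_union_ex(1)[unfolded union_ex_spec_a_def]]
      meet_distributive_singletons_UnI[OF partial_order_union_ex
        join_spec_union_ex(2)[unfolded union_ex_spec_b_def]];
      auto simp: union_ex_joins[simplified]; auto simp: union_ex_order_def)+

lemma maximal_frame_generating_union_ex:
  "join_spec union_ex_carrier union_ex_order (U_plus union_ex_carrier union_ex_order union_ex_spec_a)"
  "maximal_js union_ex_carrier union_ex_order (U_plus union_ex_carrier union_ex_order union_ex_spec_a)"
  "frame_generating union_ex_carrier union_ex_order (U_plus union_ex_carrier union_ex_order union_ex_spec_a)"
  "join_spec union_ex_carrier union_ex_order (U_plus union_ex_carrier union_ex_order union_ex_spec_b)"
  "maximal_js union_ex_carrier union_ex_order (U_plus union_ex_carrier union_ex_order union_ex_spec_b)"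
  "frame_generating union_ex_carrier union_ex_order (U_plus union_ex_carrier union_ex_order union_ex_spec_b)"
  using partial_order_union_ex join_spec_union_ex meet_distributive_union_ex
  by (simp_all add: join_spec_U_plus maximal_js_U_plus frame_generating_U_plus_iff
      frame_generating_if_meet_distributive)

lemma union_ex_triple_not_mem_U_plus:
  "{0, 1, 2} \<notin> U_plus union_ex_carrier union_ex_order union_ex_spec_a"
  "{0, 1, 2} \<notin> U_plus union_ex_carrier union_ex_order union_ex_spec_b"
proof -
  have "U_ideal union_ex_carrier union_ex_order union_ex_spec_a {0, 1, 2, 3}"
    unfolding union_ex_spec_a_def U_ideal_singletons_Un_iff[OF partial_order_union_ex]
    by (simp add: union_ex_joins[simplified])
      (auto simp: down_closed_def union_ex_carrier_def union_ex_order_def)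
  then show "{0, 1, 2} \<notin> U_plus union_ex_carrier union_ex_order union_ex_spec_a"
    by (rule not_mem_U_plus_if_U_ideal) (auto simp: union_ex_joins[simplified])
  have "U_ideal union_ex_carrier union_ex_order union_ex_spec_b {0, 1, 2}"
    unfolding union_ex_spec_b_def U_ideal_singletons_Un_iff[OF partial_order_union_ex]
    by (auto simp: down_closed_def union_ex_carrier_def union_ex_order_def)
  then show "{0, 1, 2} \<notin> U_plus union_ex_carrier union_ex_order union_ex_spec_b"
    by (rule not_mem_U_plus_if_U_ideal) (auto simp: union_ex_joins[simplified])
qed

lemma union_ex_triple_mem_U_plus_Un:
  "{0, 1, 2} \<in> U_plus union_ex_carrier union_ex_order
     (U_plus union_ex_carrier union_ex_order union_ex_spec_a \<union>
      U_plus union_ex_carrier union_ex_order union_ex_spec_b)"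
proof -
  let ?G = "Gamma union_ex_carrier union_ex_order (union_ex_spec_a \<union> union_ex_spec_b) {0, 1, 2}"
  have triple: "{0, 1, 2} \<subseteq> ?G" by (rule Gamma_subset)
  then have "{0, 1} \<subseteq> ?G" by auto
  then have "join union_ex_carrier union_ex_order {0, 1} \<in> ?G"
    by (rule Gamma_join_closed[rotated]) (simp add: union_ex_spec_a_def)
  then have "3 \<in> ?G" unfolding union_ex_joins(1) .
  with triple have "{2, 3} \<subseteq> ?G" by auto
  then have "join union_ex_carrier union_ex_order {2, 3} \<in> ?G"
    by (rule Gamma_join_closed[rotated]) (simp add: union_ex_spec_b_def)
  then have "4 \<in> ?G" unfolding union_ex_joins(2) .
  also have "?G \<subseteq> Gamma union_ex_carrier union_ex_order
     (U_plus union_ex_carrier union_ex_order union_ex_spec_a \<union>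
      U_plus union_ex_carrier union_ex_order union_ex_spec_b) {0, 1, 2}"
    using subset_U_plus[OF partial_order_union_ex] join_spec_union_ex
    by (intro Gamma_mono_spec Un_mono) auto
  finally have "join union_ex_carrier union_ex_order {0, 1, 2} \<in> Gamma union_ex_carrier union_ex_order
     (U_plus union_ex_carrier union_ex_order union_ex_spec_a \<union>
      U_plus union_ex_carrier union_ex_order union_ex_spec_b) {0, 1, 2}"
    by (simp only: union_ex_joins(3))
  moreover have "join_exists union_ex_carrier union_ex_order {0, 1, 2}"
    using union_ex_lubs(3) unfolding join_exists_def by blast
  moreover have "{0, 1, 2} \<subseteq> union_ex_carrier" by (simp add: union_ex_carrier_def)
  ultimately show ?thesis unfolding U_plus_def[where U = "_ \<union> _"] by blast
qed

lemma union_ex_not_maximal: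
  "\<not> maximal_js union_ex_carrier union_ex_order
     (U_plus union_ex_carrier union_ex_order union_ex_spec_a \<union>
      U_plus union_ex_carrier union_ex_order union_ex_spec_b)"
  using union_ex_triple_not_mem_U_plus union_ex_triple_mem_U_plus_Un
  unfolding maximal_js_def by blast

section \<open>An intersection of frame-generating specifications that is not frame-generating\<close>

definition inter_ex_carrier :: "nat set" where
  "inter_ex_carrier = {0, 1, 2, 3, 4, 5, 6}"

text \<open>The order 0 < 1, 2; 1 < 3; 2 < 4; 1, 2 < 5 and 3, 4, 5 < 6, so that
  1 v 2 = 0 v 1 v 2 = 5 <= 6 = 3 v 4.\<close>

definition inter_ex_order :: "nat rel" where
  "inter_ex_order = {(0, 0), (1, 1), (2, 2), (3, 3), (4, 4), (5, 5), (6, 6),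
    (0, 1), (0, 2), (0, 3), (0, 4), (0, 5), (0, 6), (1, 3), (1, 5), (1, 6),
    (2, 4), (2, 5), (2, 6), (3, 6), (4, 6), (5, 6)}"

definition inter_ex_spec_a :: "nat set set" where
  "inter_ex_spec_a = (\<lambda>p. {p}) ` inter_ex_carrier \<union> {{3, 4}, {1, 2}}"

definition inter_ex_spec_b :: "nat set set" where
  "inter_ex_spec_b = (\<lambda>p. {p}) ` inter_ex_carrier \<union> {{3, 4}, {0, 1, 2}}"

lemma partial_order_inter_ex: "partial_order_on inter_ex_carrier inter_ex_order"
  unfolding partial_order_on_def preorder_on_def refl_on_def trans_def antisym_def
    inter_ex_carrier_def inter_ex_order_def
  by auto

lemma inter_ex_lubs:
  "is_lub inter_ex_carrier inter_ex_order {3, 4} 6"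
  "is_lub inter_ex_carrier inter_ex_order {1, 2} 5"
  "is_lub inter_ex_carrier inter_ex_order {0, 1, 2} 5"
  by (simp_all add: is_lub_def inter_ex_carrier_def inter_ex_order_def)

lemmas inter_ex_joins = inter_ex_lubs[THEN join_eqI[OF partial_order_inter_ex]]

lemma inter_ex_spec_Int:
  "inter_ex_spec_a \<inter> inter_ex_spec_b = (\<lambda>p. {p}) ` inter_ex_carrier \<union> {{3, 4}}"
proof -
  have "{1, 2} \<noteq> {0, 1, 2 :: nat}" by (auto simp: set_eq_iff)
  then have "{{3, 4}, {1, 2}} \<inter> {{3, 4}, {0, 1, 2}} = {{3, 4 :: nat}}"
    by (auto simp: doubleton_eq_iff)
  then show ?thesis
    unfolding inter_ex_spec_a_def inter_ex_spec_b_def Un_Int_distrib[symmetric] by (rule arg_cong)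
qed

lemma join_spec_inter_ex:
  "join_spec inter_ex_carrier inter_ex_order inter_ex_spec_a"
  "join_spec inter_ex_carrier inter_ex_order inter_ex_spec_b"
  "join_spec inter_ex_carrier inter_ex_order (inter_ex_spec_a \<inter> inter_ex_spec_b)"
  unfolding inter_ex_spec_Int unfolding inter_ex_spec_a_def inter_ex_spec_b_def
  by (rule join_spec_singletons_Un[OF partial_order_inter_ex],
      simp add: inter_ex_carrier_def, use inter_ex_lubs in \<open>simp add: join_exists_def, blast\<close>)+

lemma inter_ex_down_5_34:
  "{0, 1, 2} \<subseteq> down inter_ex_carrier inter_ex_order {5} \<inter> down inter_ex_carrier inter_ex_order {3, 4}"
  by (auto simp: down_def inter_ex_carrier_def inter_ex_order_def)

lemma meet_distributive_inter_ex:
  assumes W: "W = {1, 2} \<or> W = {0, 1, 2}"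
  shows "meet_distributive inter_ex_carrier inter_ex_order ((\<lambda>p. {p}) ` inter_ex_carrier \<union> {{3, 4}, W})"
proof (rule meet_distributive_singletons_UnI[OF partial_order_inter_ex])
  show "join_spec inter_ex_carrier inter_ex_order ((\<lambda>p. {p}) ` inter_ex_carrier \<union> {{3, 4}, W})"
    using W join_spec_inter_ex(1,2) unfolding inter_ex_spec_a_def inter_ex_spec_b_def by blast
  have join_W: "join inter_ex_carrier inter_ex_order W = 5" using W inter_ex_joins(2,3) by blast
  fix S z assume S: "S \<in> {{3, 4}, W}" and z: "z \<in> inter_ex_carrier"
    "(z, join inter_ex_carrier inter_ex_order S) \<in> inter_ex_order"
    "z \<noteq> join inter_ex_carrier inter_ex_order S" "\<forall>s\<in>S. (z, s) \<notin> inter_ex_order"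
  from S consider (pair) "S = {3, 4}" | (other) "S = W" by blast
  then show "\<exists>S'\<in>(\<lambda>p. {p}) ` inter_ex_carrier \<union> {{3, 4}, W}.
      S' \<subseteq> down inter_ex_carrier inter_ex_order {z} \<inter> down inter_ex_carrier inter_ex_order S \<and>
      join inter_ex_carrier inter_ex_order S' = z"
  proof cases
    case pair
    with z have "z = 5"
      by (auto simp: inter_ex_joins[simplified]) (auto simp: inter_ex_carrier_def inter_ex_order_def)
    moreover have "W \<subseteq> {0, 1, 2}" using W by blast
    ultimately show ?thesis using pair join_W inter_ex_down_5_34 by blast
  next
    case other
    with z W join_W have "(z, 5) \<in> inter_ex_order" "z \<noteq> 5"
      "(z, 1) \<notin> inter_ex_order" "(z, 2) \<notin> inter_ex_order"
      by auto
    with z(1) have False by (auto simp: inter_ex_carrier_def inter_ex_order_def)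
    then show ?thesis ..
  qed
qed

lemma not_meet_distributive_inter_ex:
  "\<not> meet_distributive inter_ex_carrier inter_ex_order (inter_ex_spec_a \<inter> inter_ex_spec_b)"
proof (rule not_meet_distributive_if_U_ideal[where S = "{3, 4}" and z = 5 and C = "{0, 1, 2}"])
  show "U_ideal inter_ex_carrier inter_ex_order (inter_ex_spec_a \<inter> inter_ex_spec_b) {0, 1, 2}"
    unfolding inter_ex_spec_Int U_ideal_singletons_Un_iff[OF partial_order_inter_ex]
    by (auto simp: down_closed_def inter_ex_carrier_def inter_ex_order_def)
  show "down inter_ex_carrier inter_ex_order {5} \<inter> down inter_ex_carrier inter_ex_order {3, 4}
      \<subseteq> {0, 1, 2}"
    by (auto simp: down_def inter_ex_carrier_def inter_ex_order_def)
  show "(5, join inter_ex_carrier inter_ex_order {3, 4}) \<in> inter_ex_order"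
    unfolding inter_ex_joins(1) by (simp add: inter_ex_order_def)
qed (simp_all add: inter_ex_spec_Int inter_ex_carrier_def)

lemma frame_generating_inter_ex:
  "frame_generating inter_ex_carrier inter_ex_order inter_ex_spec_a"
  "frame_generating inter_ex_carrier inter_ex_order inter_ex_spec_b"
  "\<not> frame_generating inter_ex_carrier inter_ex_order (inter_ex_spec_a \<inter> inter_ex_spec_b)"
  using frame_generating_iff_meet_distributive[OF partial_order_inter_ex join_spec_inter_ex(1)]
    frame_generating_iff_meet_distributive[OF partial_order_inter_ex join_spec_inter_ex(2)]
    frame_generating_iff_meet_distributive[OF partial_order_inter_ex join_spec_inter_ex(3)]
    meet_distributive_inter_ex not_meet_distributive_inter_ex
  unfolding inter_ex_spec_a_def inter_ex_spec_b_def by blast+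

theorem theorem4p6:
  shows "(\<forall>(P :: 'a set) r (I :: 'i set) Us.
            partial_order_on P r \<and> I \<noteq> {} \<and>
            (\<forall>i\<in>I. join_spec P r (Us i) \<and> frame_generating P r (Us i))
          \<longrightarrow> join_spec P r (\<Union>i\<in>I. Us i) \<and> frame_generating P r (\<Union>i\<in>I. Us i))
       \<and> (\<exists>(Q :: nat set) r U1 U2.
            partial_order_on Q r \<and>
            join_spec Q r U1 \<and> maximal_js Q r U1 \<and> frame_generating Q r U1 \<and>
            join_spec Q r U2 \<and> maximal_js Q r U2 \<and> frame_generating Q r U2 \<and>
            \<not> maximal_js Q r (U1 \<union> U2))
       \<and> (\<forall>(P :: 'a set) r (I :: 'i set) Us.
            partial_order_on P r \<and> I \<noteq> {} \<and>
            (\<forall>i\<in>I. join_spec P r (Us i) \<and> maximal_js P r (Us i) \<and> frame_generating P r (Us i))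
          \<longrightarrow> join_spec P r (\<Inter>i\<in>I. Us i) \<and> maximal_js P r (\<Inter>i\<in>I. Us i)
              \<and> frame_generating P r (\<Inter>i\<in>I. Us i))
       \<and> (\<exists>(Q :: nat set) r U1 U2.
            partial_order_on Q r \<and>
            join_spec Q r U1 \<and> frame_generating Q r U1 \<and>
            join_spec Q r U2 \<and> frame_generating Q r U2 \<and>
            \<not> frame_generating Q r (U1 \<inter> U2))"
  apply (intro conjI allI impI; (elim conjE)?)
  subgoal by (rule join_spec_UNION) auto
  subgoal by (rule frame_generating_UNION) auto
  subgoal
    apply (rule exI[of _ union_ex_carrier], rule exI[of _ union_ex_order],
        rule exI[of _ "U_plus union_ex_carrier union_ex_order union_ex_spec_a"],
        rule exI[of _ "U_plus union_ex_carrier union_ex_order union_ex_spec_b"])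
    by (intro conjI partial_order_union_ex maximal_frame_generating_union_ex union_ex_not_maximal)
  subgoal by (rule join_spec_INTER) auto
  subgoal by (rule maximal_js_INTER) auto
  subgoal by (rule frame_generating_INTER) auto
  subgoal
    apply (rule exI[of _ inter_ex_carrier], rule exI[of _ inter_ex_order],
        rule exI[of _ inter_ex_spec_a], rule exI[of _ inter_ex_spec_b])
    by (intro conjI partial_order_inter_ex join_spec_inter_ex frame_generating_inter_ex)
  done

end
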